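(* Let $A=(Q,q_0,\Sigma,\delta,\alpha)$ with $Q_d$ be an LDBA, $\mathsf{Ord}$ an ordering of its states w.r.t. $Q_d$, and $w\in\Sigma^\omega$. The color summary of the run DAG $G_w$ is even if and only if $G_w$ contains an accepting run (equivalently, iff $w\in\mathsf L(A)$).
   Context: A (transition-based) nondeterministic Büchi automaton is $A=(Q,q_0,\Sigma,\delta,\alpha)$ with finite $Q$, $q_0\in Q$, finite alphabet $\Sigma$, total $\delta\subseteq Q\times\Sigma\times Q$, and accepting transitions $\alpha\subseteq\delta$. A run on $w\in\Sigma^\omega$ is $\rho:\mathbb N\to Q$ with $\rho(0)=q_0$, $(\rho(i),w(i),\rho(i+1))\in\delta$; it is accepting if $(\rho(i),w(i),\rho(i+1))\in\alpha$ for infinitely many $i$; $\mathsf L(A)$ is the set of words with an accepting run. An LDBA additionally has $Q_d\subseteq Q$ with (1) $\alpha\subseteq Q_d\times\Sigma\times Q_d$; (2) each $q\in Q_d$ has exactly one $\sigma$-successor $\delta(q,\sigma)$ for each $\sigma$; (3) successors of states in $Q_d$ are in $Q_d$. Assume $q_0\notin Q_d$. Run DAG $G_w=(V,E)$: $V_0=\{(q_0,0)\}$, $V_i=\{(q,i)\mid\exists(q',i-1)\in V_{i-1}:(q',w(i-1),q)\in\delta\}$, $E=\{((q,i),(q',i+1))\in V_i\times V_{i+1}\mid (q,w(i),q')\in\delta\}$, $V^d_i=V_i\cap(Q_d\times\{i\})$. Runs are paths from $(q_0,0)$; a run $v_0v_1\dots$ with $v_i=(q_i,i)$ is accepting if $(q_i,w(i),q_{i+1})\in\alpha$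 for infinitely many $i$. An ordering w.r.t. $Q_d$ is $\mathsf{Ord}:Q\to\{1,\dots,|Q_d|,+\infty\}$ with value $+\infty$ exactly on $Q\setminus Q_d$ and injective on $Q_d$; $\mathsf{Ord}((q,i))=\mathsf{Ord}(q)$. For run prefixes of equal length $n+1$, $\rho(0..n)\sqsubseteq\rho'(0..n)$ iff their $\mathsf{Ord}$-sequences are equal or lexicographically smaller (first differing position $i$ has $\mathsf{Ord}(\rho(i))<\mathsf{Ord}(\rho'(i))$, with $+\infty$ above all integers). For distinct $v,v'\in V_i$, $v\sqsubset_i v'$ iff some run prefix ending in $v$ is $\sqsubseteq$-smaller than all run prefixes ending in $v'$; this is a total order on $V^d_i$. $\mathsf{Ind}_i(v)\in\{1,\dots,|Q_d|\}$ is the position of $v\in V^d_i$ in this order (the smallest has index 1). $\mathsf{Dec}(V^d_i)$ is the set of $v\in V^d_i$ whose (unique) successor $v'\in V^d_{i+1}$ satisfies $\mathsf{Ind}_{i+1}(v')<\mathsf{Ind}_i(v)$. $\mathsf{Acc}(V^d_i)$ is the set of $v=(q,i)\in V^d_i$ having an edge to some $(q',i+1)\in V^d_{i+1}$ with $(q,w(i),q')\in\alpha$. The color of the step from level $i$ to $i+1$ is: if $\mathsf{Dec}=\emptyset$ and $\mathsf{Acc}\neq\emptyset$: $2\min_{v\in\mathsf{Acc}(V^d_i)}\mathsf{Ind}_i(v)$; if $\mathsf{Dec}\ne\emptyset$ and $\mathsf{Acc}=\emptyset$: $2\min_{v\in\mathsf{Dec}(V^d_i)}\mathsf{Ind}_i(v)-1$;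 if both nonempty: the minimum of these two values; if both empty: $2|Q_d|+1$. The color summary of $G_w$ is the minimal color occurring infinitely often in this sequence of colors. *)

theory Defs
  imports Main "HOL-Library.Extended_Nat"
begin

record ('q, 'a) nba =
  states :: "'q set"
  init   :: 'q
  alph   :: "'a set"
  trans  :: "('q \<times> 'a \<times> 'q) set"
  acc    :: "('q \<times> 'a \<times> 'q) set"

definition is_nba :: "('q, 'a) nba \<Rightarrow> bool" where
  "is_nba A \<longleftrightarrow> finite (states A) \<and> init A \<in> states A \<and> finite (alph A)
     \<and> trans A \<subseteq> states A \<times> alph A \<times> states A
     \<and> (\<forall>q\<in>states A. \<forall>\<sigma>\<in>alph A. \<exists>q'. (q, \<sigma>, q') \<in> trans A)
     \<and> acc A \<subseteq> trans A"

definition is_ldba :: "('q, 'a) nba \<Rightarrow> 'q set \<Rightarrow> bool" where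
  "is_ldba A Qd \<longleftrightarrow> is_nba A \<and> Qd \<subseteq> states A
     \<and> acc A \<subseteq> Qd \<times> alph A \<times> Qd
     \<and> (\<forall>q\<in>Qd. \<forall>\<sigma>\<in>alph A. \<exists>!q'. (q, \<sigma>, q') \<in> trans A)
     \<and> (\<forall>q\<in>Qd. \<forall>\<sigma> q'. (q, \<sigma>, q') \<in> trans A \<longrightarrow> q' \<in> Qd)
     \<and> init A \<notin> Qd"

definition is_word :: "('q, 'a) nba \<Rightarrow> (nat \<Rightarrow> 'a) \<Rightarrow> bool" where
  "is_word A w \<longleftrightarrow> (\<forall>i. w i \<in> alph A)"

definition is_run :: "('q, 'a) nba \<Rightarrow> (nat \<Rightarrow> 'a) \<Rightarrow> (nat \<Rightarrow> 'q) \<Rightarrow> bool" where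
  "is_run A w r \<longleftrightarrow> r 0 = init A \<and> (\<forall>i. (r i, w i, r (Suc i)) \<in> trans A)"

definition accepting_run :: "('q, 'a) nba \<Rightarrow> (nat \<Rightarrow> 'a) \<Rightarrow> (nat \<Rightarrow> 'q) \<Rightarrow> bool" where
  "accepting_run A w r \<longleftrightarrow> is_run A w r \<and> (\<exists>\<^sub>\<infinity>i. (r i, w i, r (Suc i)) \<in> acc A)"

definition language :: "('q, 'a) nba \<Rightarrow> (nat \<Rightarrow> 'a) set" where
  "language A = {w. is_word A w \<and> (\<exists>r. accepting_run A w r)}"

definition is_ordering :: "('q, 'a) nba \<Rightarrow> 'q set \<Rightarrow> ('q \<Rightarrow> enat) \<Rightarrow> bool" where
  "is_ordering A Qd Ord \<longleftrightarrow>
     (\<forall>q\<in>states A. (q \<in> Qd \<longrightarrow> Ord q \<in> enat ` {1..card Qd}) \<and> (q \<notin> Qd \<longrightarrow> Ord q = \<infinity>))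
     \<and> inj_on Ord Qd"

text \<open>Levels of the run DAG G_w (vertex (q,i) is represented by q \<in> V i).\<close>
primrec dag_level :: "('q, 'a) nba \<Rightarrow> (nat \<Rightarrow> 'a) \<Rightarrow> nat \<Rightarrow> 'q set" where
  "dag_level A w 0 = {init A}"
| "dag_level A w (Suc i) = {q. \<exists>q'\<in>dag_level A w i. (q', w i, q) \<in> trans A}"

definition dag_level_d :: "('q, 'a) nba \<Rightarrow> 'q set \<Rightarrow> (nat \<Rightarrow> 'a) \<Rightarrow> nat \<Rightarrow> 'q set" where
  "dag_level_d A Qd w i = dag_level A w i \<inter> Qd"

text \<open>Run prefix of length n+1 (positions 0..n) in G_w; only values r 0 .. r n matter.\<close>
definition run_prefix :: "('q, 'a) nba \<Rightarrow> (nat \<Rightarrow> 'a) \<Rightarrow> nat \<Rightarrow> (nat \<Rightarrow> 'q) \<Rightarrow> bool" where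
  "run_prefix A w n r \<longleftrightarrow> r 0 = init A \<and> (\<forall>j<n. (r j, w j, r (Suc j)) \<in> trans A)"

definition prefix_le :: "('q \<Rightarrow> enat) \<Rightarrow> nat \<Rightarrow> (nat \<Rightarrow> 'q) \<Rightarrow> (nat \<Rightarrow> 'q) \<Rightarrow> bool" where
  "prefix_le Ord n r r' \<longleftrightarrow>
     (\<forall>j\<le>n. Ord (r j) = Ord (r' j))
     \<or> (\<exists>k\<le>n. (\<forall>j<k. Ord (r j) = Ord (r' j)) \<and> Ord (r k) < Ord (r' k))"

definition vertex_less :: "('q, 'a) nba \<Rightarrow> (nat \<Rightarrow> 'a) \<Rightarrow> ('q \<Rightarrow> enat) \<Rightarrow> nat \<Rightarrow> 'q \<Rightarrow> 'q \<Rightarrow> bool" where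
  "vertex_less A w Ord i q q' \<longleftrightarrow> q \<noteq> q' \<and>
     (\<exists>r. run_prefix A w i r \<and> r i = q \<and>
        (\<forall>r'. run_prefix A w i r' \<and> r' i = q' \<longrightarrow> prefix_le Ord i r r'))"

definition ind :: "('q, 'a) nba \<Rightarrow> 'q set \<Rightarrow> (nat \<Rightarrow> 'a) \<Rightarrow> ('q \<Rightarrow> enat) \<Rightarrow> nat \<Rightarrow> 'q \<Rightarrow> nat" where
  "ind A Qd w Ord i q = card {q' \<in> dag_level_d A Qd w i. vertex_less A w Ord i q' q} + 1"

definition dec_set :: "('q, 'a) nba \<Rightarrow> 'q set \<Rightarrow> (nat \<Rightarrow> 'a) \<Rightarrow> ('q \<Rightarrow> enat) \<Rightarrow> nat \<Rightarrow> 'q set" where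
  "dec_set A Qd w Ord i = {q \<in> dag_level_d A Qd w i. \<exists>q'. (q, w i, q') \<in> trans A
        \<and> q' \<in> dag_level_d A Qd w (Suc i) \<and> ind A Qd w Ord (Suc i) q' < ind A Qd w Ord i q}"

definition acc_set :: "('q, 'a) nba \<Rightarrow> 'q set \<Rightarrow> (nat \<Rightarrow> 'a) \<Rightarrow> nat \<Rightarrow> 'q set" where
  "acc_set A Qd w i = {q \<in> dag_level_d A Qd w i. \<exists>q'. q' \<in> dag_level_d A Qd w (Suc i)
        \<and> (q, w i, q') \<in> trans A \<and> (q, w i, q') \<in> acc A}"

definition color :: "('q, 'a) nba \<Rightarrow> 'q set \<Rightarrow> (nat \<Rightarrow> 'a) \<Rightarrow> ('q \<Rightarrow> enat) \<Rightarrow> nat \<Rightarrow> nat" where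
  "color A Qd w Ord i =
    (let D = dec_set A Qd w Ord i; F = acc_set A Qd w i;
         cA = 2 * Min (ind A Qd w Ord i ` F);
         cD = 2 * Min (ind A Qd w Ord i ` D) - 1
     in if D = {} \<and> F \<noteq> {} then cA
        else if D \<noteq> {} \<and> F = {} then cD
        else if D \<noteq> {} \<and> F \<noteq> {} then min cA cD
        else 2 * card Qd + 1)"

definition color_summary :: "('q, 'a) nba \<Rightarrow> 'q set \<Rightarrow> (nat \<Rightarrow> 'a) \<Rightarrow> ('q \<Rightarrow> enat) \<Rightarrow> nat" where
  "color_summary A Qd w Ord = (LEAST c. \<exists>\<^sub>\<infinity>i. color A Qd w Ord i = c)"

definition dag_has_accepting_run :: "('q, 'a) nba \<Rightarrow> (nat \<Rightarrow> 'a) \<Rightarrow> bool" where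
  "dag_has_accepting_run A w \<longleftrightarrow>
     (\<exists>r. r 0 = init A \<and> (\<forall>i. r i \<in> dag_level A w i \<and> (r i, w i, r (Suc i)) \<in> trans A)
        \<and> (\<exists>\<^sub>\<infinity>i. (r i, w i, r (Suc i)) \<in> acc A))"

end

theory Submission
  imports Defs "HOL-Library.Infinite_Set" "HOL-Library.List_Lexorder"
begin

text \<open>
  Order the vertices of level i by the lexicographically least Ord-sequence of a run prefix
  reaching them; this is the order defining Ind, so Ind is the rank in it. Vertices outside Qd
  only have all-infinity sequences, so every vertex of level i+1 below the successor of q is the
  successor of a vertex below q: indices never increase along deterministic edges. Along a run
  that stays in Qd the index therefore stabilises at some k, and once it has, the successor map
  is injective and order-preserving below that vertex, so no vertex of index at most k
  decreases. Hence an accepting run makes a colour at most 2k recur while no odd colour below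
  2k+1 recurs: the summary is even. Conversely, if the summary is 2k, then eventually no colour
  below 2k occurs, so a vertex of index k that produced colour 2k keeps index k along its
  deterministic run, and every later occurrence of colour 2k is an accepting edge of that run.
\<close>

section \<open>Lexicographic order on lists\<close>

lemma list_le_iff_nth:
  fixes xs ys :: "'a::linorder list"
  assumes "length xs = length ys"
  shows "xs \<le> ys \<longleftrightarrow> (\<forall>j<length xs. xs ! j = ys ! j)
     \<or> (\<exists>k<length xs. (\<forall>j<k. xs ! j = ys ! j) \<and> xs ! k < ys ! k)"
  using assms
proof (induction xs ys rule: list_induct2)
  case Nil
  then show ?case by simp
next
  case (Cons x xs y ys)
  show ?case
    unfolding Cons_le_Cons Cons.IH length_Cons All_less_Suc2 Ex_less_Suc2 by auto
qed

lemma snoc_le_snoc_iff: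
  fixes xs ys :: "'a::linorder list"
  assumes "length xs = length ys"
  shows "xs @ [a] \<le> ys @ [b] \<longleftrightarrow> xs < ys \<or> xs = ys \<and> a \<le> b"
  using assms by (induction xs ys rule: list_induct2) auto

lemma snoc_less_snoc_iff:
  fixes xs ys :: "'a::linorder list"
  assumes "length xs = length ys"
  shows "xs @ [a] < ys @ [b] \<longleftrightarrow> xs < ys \<or> xs = ys \<and> a < b"
  using assms by (induction xs ys rule: list_induct2) auto

lemma snoc_le_snoc_mono:
  fixes xs ys :: "'a::linorder list"
  assumes "length xs = length ys" "xs \<le> ys"
  shows "xs @ [a] \<le> ys @ [a]"
  using assms by (cases "xs = ys") (auto simp: snoc_le_snoc_iff dest: order.not_eq_order_implies_strict)

lemma le_replicate_top:
  fixes xs :: "'a::{linorder,order_top} list"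
  shows "xs \<le> replicate (length xs) top"
  by (induction xs) (auto simp: less_le)

lemma prefix_le_iff_map_le:
  "prefix_le f n r s \<longleftrightarrow> map (\<lambda>j. f (r j)) [0..<Suc n] \<le> map (\<lambda>j. f (s j)) [0..<Suc n]"
  by (subst list_le_iff_nth) (auto simp: prefix_le_def nth_append less_Suc_eq_le simp del: upt_Suc)

section \<open>Ranks, and least values occurring infinitely often\<close>

lemma card_less_key_less_iff:
  fixes key :: "'a \<Rightarrow> 'b::linorder"
  assumes "finite S" "x \<in> S" "y \<in> S"
  shows "card {z\<in>S. key z < key x} < card {z\<in>S. key z < key y} \<longleftrightarrow> key x < key y"
proof
  assume "key x < key y"
  then have "{z\<in>S. key z < key x} \<subset> {z\<in>S. key z < key y}"
    using assms(2) by auto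
  then show "card {z\<in>S. key z < key x} < card {z\<in>S. key z < key y}"
    using assms(1) by (auto intro: psubset_card_mono)
next
  assume "card {z\<in>S. key z < key x} < card {z\<in>S. key z < key y}"
  moreover have "card {z\<in>S. key z < key y} \<le> card {z\<in>S. key z < key x}" if "key y \<le> key x"
    using that assms(1) by (intro card_mono) auto
  ultimately show "key x < key y" by fastforce
qed

lemma card_less_key_less_card:
  fixes key :: "'a \<Rightarrow> 'b::linorder"
  assumes "finite S" "x \<in> S"
  shows "card {z\<in>S. key z < key x} < card S"
  using assms by (intro psubset_card_mono) auto

lemma INFM_bounded_obtain_INFM_eq:
  fixes f :: "nat \<Rightarrow> nat"
  assumes "\<exists>\<^sub>\<infinity>i. f i \<le> c"
  obtains d where "d \<le> c" "\<exists>\<^sub>\<infinity>i. f i = d"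
proof -
  have "\<exists>\<^sub>\<infinity>i. \<exists>d\<in>{..c}. f i = d" using assms by simp
  then show ?thesis
    using that by (auto simp only: INFM_finite_Bex_distrib[OF finite_atMost] atMost_iff)
qed

lemma INFM_eq_Least_INFM:
  fixes f :: "nat \<Rightarrow> nat"
  assumes "\<exists>\<^sub>\<infinity>i. f i \<le> c"
  shows "\<exists>\<^sub>\<infinity>i. f i = (LEAST d. \<exists>\<^sub>\<infinity>i. f i = d)"
  using assms by (rule INFM_bounded_obtain_INFM_eq) (rule LeastI)

lemma Least_INFM_le:
  fixes f :: "nat \<Rightarrow> nat"
  assumes "\<exists>\<^sub>\<infinity>i. f i \<le> c"
  shows "(LEAST d. \<exists>\<^sub>\<infinity>i. f i = d) \<le> c"
  using assms by (rule INFM_bounded_obtain_INFM_eq) (use Least_le in fastforce)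

lemma Least_INFM_less:
  fixes f :: "nat \<Rightarrow> nat"
  assumes "\<exists>\<^sub>\<infinity>i. f i < c"
  shows "(LEAST d. \<exists>\<^sub>\<infinity>i. f i = d) < c"
proof -
  have "\<exists>\<^sub>\<infinity>i. f i \<le> c - 1"
    using assms by (rule INFM_mono) simp
  moreover have "0 < c"
    using assms by (auto elim: INFM_E)
  ultimately show ?thesis
    using Least_INFM_le by fastforce
qed

lemma eventually_const_if_nonincreasing:
  fixes g :: "nat \<Rightarrow> nat"
  assumes "\<And>i. i \<ge> m \<Longrightarrow> g (Suc i) \<le> g i"
  obtains k n where "n \<ge> m" "\<And>i. i \<ge> n \<Longrightarrow> g i = k"
proof -
  define k where "k = (LEAST v. \<exists>i\<ge>m. g i = v)"
  obtain n where n: "n \<ge> m" "g n = k"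
    using LeastI[of "\<lambda>v. \<exists>i\<ge>m. g i = v" "g m"] unfolding k_def by blast
  have "g i \<le> g n" if "i \<ge> n" for i
    using that by (induction i rule: dec_induct) (use assms n(1) order_trans in auto)
  moreover have "k \<le> g i" if "i \<ge> m" for i
    using that unfolding k_def by (auto intro: Least_le)
  ultimately show ?thesis
    using that n by (metis order.antisym order.trans)
qed

section \<open>The run DAG of an LDBA\<close>

locale ldba_dag =
  fixes A :: "('q, 'a) nba" and Qd :: "'q set" and Ord :: "'q \<Rightarrow> enat" and w :: "nat \<Rightarrow> 'a"
  assumes ldba: "is_ldba A Qd" and ordering: "is_ordering A Qd Ord" and word: "is_word A w"
begin

abbreviation V where "V i \<equiv> dag_level A w i"
abbreviation Vd where "Vd i \<equiv> dag_level_d A Qd w i"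
abbreviation Ind where "Ind i \<equiv> ind A Qd w Ord i"
abbreviation Dec where "Dec i \<equiv> dec_set A Qd w Ord i"
abbreviation Acc where "Acc i \<equiv> acc_set A Qd w i"
abbreviation col where "col i \<equiv> color A Qd w Ord i"

lemma finite_states: "finite (states A)"
  using ldba by (simp add: is_ldba_def is_nba_def)

lemma init_in_states: "init A \<in> states A"
  using ldba by (simp add: is_ldba_def is_nba_def)

lemma trans_in_states: "(p, a, q) \<in> trans A \<Longrightarrow> p \<in> states A \<and> q \<in> states A"
  using ldba unfolding is_ldba_def is_nba_def by blast

lemma Qd_subset_states: "Qd \<subseteq> states A"
  using ldba by (simp add: is_ldba_def)

lemma finite_Qd: "finite Qd"
  using Qd_subset_states finite_states by (rule finite_subset)

lemma acc_in_Qd: "(p, a, q) \<in> acc A \<Longrightarrow> p \<in> Qd"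
  using ldba unfolding is_ldba_def by blast

lemma Qd_closed: "p \<in> Qd \<Longrightarrow> (p, a, q) \<in> trans A \<Longrightarrow> q \<in> Qd"
  using ldba unfolding is_ldba_def by blast

lemma Ord_in_Qd: "q \<in> Qd \<Longrightarrow> Ord q \<noteq> \<infinity>"
  using ordering Qd_subset_states unfolding is_ordering_def by blast

lemma Ord_notin_Qd: "q \<in> states A \<Longrightarrow> q \<notin> Qd \<Longrightarrow> Ord q = \<infinity>"
  using ordering unfolding is_ordering_def by blast

lemma inj_on_Ord: "inj_on Ord Qd"
  using ordering unfolding is_ordering_def by blast

definition det_succ :: "nat \<Rightarrow> 'q \<Rightarrow> 'q" where
  "det_succ i p = (THE q. (p, w i, q) \<in> trans A)"

lemma Qd_ex1_succ:
  assumes "p \<in> Qd"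
  shows "\<exists>!q. (p, w i, q) \<in> trans A"
proof -
  have "w i \<in> alph A" using word by (simp add: is_word_def)
  then show ?thesis using ldba assms unfolding is_ldba_def by blast
qed

lemma det_succ_trans: "p \<in> Qd \<Longrightarrow> (p, w i, det_succ i p) \<in> trans A"
  unfolding det_succ_def by (rule theI') (rule Qd_ex1_succ)

lemma det_succ_Qd: "p \<in> Qd \<Longrightarrow> det_succ i p \<in> Qd"
  using Qd_closed det_succ_trans by blast

lemma det_succ_unique: "p \<in> Qd \<Longrightarrow> (p, w i, q) \<in> trans A \<Longrightarrow> q = det_succ i p"
  using Qd_ex1_succ det_succ_trans by blast

lemma Vd_iff: "q \<in> Vd i \<longleftrightarrow> q \<in> V i \<and> q \<in> Qd"
  by (simp add: dag_level_d_def)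

lemma finite_Vd: "finite (Vd i)"
  using finite_Qd by (simp add: dag_level_d_def)

lemma det_succ_Vd: "p \<in> Vd i \<Longrightarrow> det_succ i p \<in> Vd (Suc i)"
  using det_succ_trans det_succ_Qd by (auto simp: Vd_iff)

lemma V_in_states: "q \<in> V i \<Longrightarrow> q \<in> states A"
  by (induction i arbitrary: q) (auto simp: init_in_states dest: trans_in_states)

lemma run_prefix_V: "run_prefix A w i r \<Longrightarrow> j \<le> i \<Longrightarrow> r j \<in> V j"
proof (induction j)
  case (Suc j)
  then have "(r j, w j, r (Suc j)) \<in> trans A" by (simp add: run_prefix_def)
  then show ?case using Suc by auto
qed (simp add: run_prefix_def)

lemma V_imp_run_prefix: "q \<in> V i \<Longrightarrow> \<exists>r. run_prefix A w i r \<and> r i = q"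
proof (induction i arbitrary: q)
  case 0
  then show ?case by (auto simp: run_prefix_def)
next
  case (Suc i)
  then obtain p where p: "p \<in> V i" "(p, w i, q) \<in> trans A"
    by auto
  then obtain r where "run_prefix A w i r" "r i = p"
    using Suc.IH by blast
  with p have "run_prefix A w (Suc i) (r(Suc i := q))"
    by (auto simp: run_prefix_def less_Suc_eq)
  then show ?case by fastforce
qed

lemma run_prefix_Suc: "run_prefix A w (Suc i) r \<Longrightarrow> run_prefix A w i r"
  by (simp add: run_prefix_def)

lemma run_prefix_stays_in_Qd:
  assumes "run_prefix A w i r" "r j \<in> Qd" "j \<le> k" "k \<le> i"
  shows "r k \<in> Qd"
  using assms(3,4)
proof (induction k rule: dec_induct)
  case (step n)
  then have "(r n, w n, r (Suc n)) \<in> trans A" using assms(1) by (simp add: run_prefix_def)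
  then show ?case using step Qd_closed by simp
qed (use assms(2) in simp)

definition ord_seq :: "nat \<Rightarrow> (nat \<Rightarrow> 'q) \<Rightarrow> enat list" where
  "ord_seq i r = map (\<lambda>j. Ord (r j)) [0..<Suc i]"

lemma prefix_le_iff_ord_seq_le: "prefix_le Ord i r s \<longleftrightarrow> ord_seq i r \<le> ord_seq i s"
  unfolding ord_seq_def by (rule prefix_le_iff_map_le)

lemma ord_seq_Suc: "ord_seq (Suc i) r = ord_seq i r @ [Ord (r (Suc i))]"
  by (simp add: ord_seq_def)

lemma length_ord_seq [simp]: "length (ord_seq i r) = Suc i"
  by (simp add: ord_seq_def)

lemma last_ord_seq [simp]: "last (ord_seq i r) = Ord (r i)"
  by (simp add: ord_seq_def)

definition least_seq :: "nat \<Rightarrow> 'q \<Rightarrow> enat list" where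
  "least_seq i q = Min (ord_seq i ` {r. run_prefix A w i r \<and> r i = q})"

lemma finite_ord_seqs: "finite (ord_seq i ` {r. run_prefix A w i r \<and> r i = q})"
proof (rule finite_subset)
  show "ord_seq i ` {r. run_prefix A w i r \<and> r i = q}
      \<subseteq> {xs. set xs \<subseteq> Ord ` states A \<and> length xs = Suc i}"
  proof
    fix xs
    assume "xs \<in> ord_seq i ` {r. run_prefix A w i r \<and> r i = q}"
    then obtain r where r: "run_prefix A w i r" "xs = ord_seq i r" by blast
    then have "\<forall>j\<le>i. r j \<in> states A" using run_prefix_V V_in_states by blast
    with r show "xs \<in> {xs. set xs \<subseteq> Ord ` states A \<and> length xs = Suc i}"
      by (auto simp: ord_seq_def less_Suc_eq_le)
  qed
  show "finite {xs. set xs \<subseteq> Ord ` states A \<and> length xs = Suc i}"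
    using finite_states by (simp add: finite_lists_length_eq)
qed

lemma least_seq_le: "run_prefix A w i r \<Longrightarrow> least_seq i (r i) \<le> ord_seq i r"
  unfolding least_seq_def using finite_ord_seqs by (auto intro: Min_le)

lemma least_seq_attained:
  assumes "q \<in> V i"
  obtains r where "run_prefix A w i r" "r i = q" "least_seq i q = ord_seq i r"
proof -
  have "ord_seq i ` {r. run_prefix A w i r \<and> r i = q} \<noteq> {}"
    using V_imp_run_prefix[OF assms] by blast
  then have "least_seq i q \<in> ord_seq i ` {r. run_prefix A w i r \<and> r i = q}"
    unfolding least_seq_def using finite_ord_seqs by (rule Min_in[rotated])
  then show ?thesis using that by blast
qed

lemma length_least_seq: "q \<in> V i \<Longrightarrow> length (least_seq i q) = Suc i"
  by (metis least_seq_attained length_ord_seq)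

lemma last_least_seq: "q \<in> V i \<Longrightarrow> last (least_seq i q) = Ord q"
  by (metis least_seq_attained last_ord_seq)

lemma least_seq_inj:
  assumes "p \<in> Vd i" "q \<in> Vd i" "least_seq i p = least_seq i q"
  shows "p = q"
proof -
  have "Ord p = Ord q" using assms last_least_seq by (metis Vd_iff)
  then show ?thesis using inj_on_Ord assms by (auto simp: Vd_iff inj_on_def)
qed

lemma vertex_less_iff_least_seq:
  assumes "p \<in> Vd i" "q \<in> Vd i"
  shows "vertex_less A w Ord i p q \<longleftrightarrow> least_seq i p < least_seq i q"
proof
  assume "vertex_less A w Ord i p q"
  then obtain r where r: "run_prefix A w i r" "r i = p" "p \<noteq> q"
    and below: "\<And>s. run_prefix A w i s \<Longrightarrow> s i = q \<Longrightarrow> ord_seq i r \<le> ord_seq i s"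
    unfolding vertex_less_def prefix_le_iff_ord_seq_le by blast
  obtain s where s: "run_prefix A w i s" "s i = q" "least_seq i q = ord_seq i s"
    using assms(2) least_seq_attained by (auto simp: Vd_iff)
  have "least_seq i p \<le> least_seq i q"
    using least_seq_le[OF r(1)] below[OF s(1,2)] r(2) s(3) by simp
  moreover have "least_seq i p \<noteq> least_seq i q"
    using least_seq_inj assms r(3) by blast
  ultimately show "least_seq i p < least_seq i q" by simp
next
  assume less: "least_seq i p < least_seq i q"
  obtain r where r: "run_prefix A w i r" "r i = p" "least_seq i p = ord_seq i r"
    using assms(1) least_seq_attained by (auto simp: Vd_iff)
  have "ord_seq i r \<le> ord_seq i s" if "run_prefix A w i s" "s i = q" for s
    using less least_seq_le[OF that(1)] r(3) that(2) by simp
  then show "vertex_less A w Ord i p q"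
    unfolding vertex_less_def prefix_le_iff_ord_seq_le using r less by blast
qed

definition below :: "nat \<Rightarrow> 'q \<Rightarrow> 'q set" where
  "below i q = {p \<in> Vd i. least_seq i p < least_seq i q}"

lemma finite_below: "finite (below i q)"
  using finite_Vd by (simp add: below_def)

lemma Ind_eq_card_below:
  assumes "q \<in> Vd i"
  shows "Ind i q = card (below i q) + 1"
proof -
  have "{p \<in> Vd i. vertex_less A w Ord i p q} = below i q"
    using vertex_less_iff_least_seq assms by (auto simp: below_def)
  then show ?thesis by (simp add: ind_def)
qed

lemma Ind_pos: "0 < Ind i q"
  by (simp add: ind_def)

lemma Ind_less_iff:
  assumes "p \<in> Vd i" "q \<in> Vd i"
  shows "Ind i p < Ind i q \<longleftrightarrow> least_seq i p < least_seq i q"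
  using card_less_key_less_iff[OF finite_Vd assms, of "least_seq i"] assms
  by (simp add: Ind_eq_card_below below_def)

lemma Ind_inj:
  assumes "p \<in> Vd i" "q \<in> Vd i" "Ind i p = Ind i q"
  shows "p = q"
proof (rule ccontr)
  assume "p \<noteq> q"
  then have "least_seq i p \<noteq> least_seq i q"
    using least_seq_inj[OF assms(1,2)] by blast
  then have "least_seq i p < least_seq i q \<or> least_seq i q < least_seq i p"
    by (simp only: neq_iff)
  then show False
    using Ind_less_iff[OF assms(1,2)] Ind_less_iff[OF assms(2,1)] assms(3) by auto
qed

lemma Ind_le_card_Qd:
  assumes "q \<in> Vd i"
  shows "Ind i q \<le> card Qd"
proof -
  have "card (below i q) < card (Vd i)"
    using card_less_key_less_card[OF finite_Vd assms] by (simp add: below_def)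
  moreover have "card (Vd i) \<le> card Qd"
    using finite_Qd by (simp add: dag_level_d_def card_mono)
  ultimately show ?thesis using assms by (simp add: Ind_eq_card_below)
qed

subsection \<open>Indices along deterministic edges\<close>

lemma least_seq_Suc_le:
  assumes "p \<in> V i" "(p, w i, x) \<in> trans A"
  shows "least_seq (Suc i) x \<le> least_seq i p @ [Ord x]"
proof -
  obtain r where r: "run_prefix A w i r" "r i = p" "least_seq i p = ord_seq i r"
    using assms(1) by (rule least_seq_attained)
  let ?r = "r(Suc i := x)"
  have "run_prefix A w (Suc i) ?r"
    using r assms(2) by (auto simp: run_prefix_def less_Suc_eq)
  moreover have "ord_seq (Suc i) ?r = least_seq i p @ [Ord x]"
    using r(3) by (simp add: ord_seq_def)
  ultimately show ?thesis using least_seq_le[of "Suc i" ?r] by simp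
qed

lemma least_seq_Suc:
  assumes "x \<in> V (Suc i)"
  obtains p where "p \<in> V i" "(p, w i, x) \<in> trans A"
    "least_seq (Suc i) x = least_seq i p @ [Ord x]"
proof -
  obtain r where r: "run_prefix A w (Suc i) r" "r (Suc i) = x"
    "least_seq (Suc i) x = ord_seq (Suc i) r"
    using assms by (rule least_seq_attained)
  have "r i \<in> V i"
    using run_prefix_V[OF r(1), of i] by simp
  moreover have "(r i, w i, x) \<in> trans A"
    using r(1,2) by (simp add: run_prefix_def All_less_Suc)
  ultimately have p: "r i \<in> V i" "(r i, w i, x) \<in> trans A" .
  have "least_seq i (r i) \<le> ord_seq i r"
    using least_seq_le[OF run_prefix_Suc[OF r(1)]] .
  then have "least_seq i (r i) @ [Ord x] \<le> ord_seq i r @ [Ord x]"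
    using length_least_seq[OF p(1)] by (intro snoc_le_snoc_mono) simp_all
  also have "\<dots> = least_seq (Suc i) x"
    using r(2,3) by (simp only: ord_seq_Suc)
  finally have "least_seq (Suc i) x = least_seq i (r i) @ [Ord x]"
    using least_seq_Suc_le[OF p] by (rule order.antisym[rotated])
  with p show ?thesis by (rule that)
qed

lemma least_seq_notin_Qd:
  assumes "p \<in> V i" "p \<notin> Qd"
  shows "least_seq i p = replicate (Suc i) \<infinity>"
proof -
  obtain r where r: "run_prefix A w i r" "r i = p" "least_seq i p = ord_seq i r"
    using assms(1) by (rule least_seq_attained)
  have "Ord (r j) = \<infinity>" if "j \<in> set [0..<Suc i]" for j
  proof (rule Ord_notin_Qd)
    have j: "j \<le> i" using that by auto
    show "r j \<in> states A" using run_prefix_V[OF r(1) j] by (rule V_in_states)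
    show "r j \<notin> Qd"
    proof
      assume "r j \<in> Qd"
      with r(1) have "r i \<in> Qd" using j by (rule run_prefix_stays_in_Qd[OF _ _ _ order_refl])
      then show False using assms(2) r(2) by simp
    qed
  qed
  then have "ord_seq i r = map (\<lambda>_. \<infinity>) [0..<Suc i]"
    unfolding ord_seq_def by (rule map_cong[OF refl])
  then show ?thesis using r(3) by (simp only: map_replicate_const length_upt) simp
qed

lemma Qd_if_least_seq_le:
  assumes p: "p \<in> V i" and q: "q \<in> Vd i" and le: "least_seq i p \<le> least_seq i q"
  shows "p \<in> Qd"
proof (rule ccontr)
  assume "p \<notin> Qd"
  have q_V: "q \<in> V i" "q \<in> Qd" using q by (simp_all add: Vd_iff)
  have "least_seq i q \<le> least_seq i p"
    using le_replicate_top[of "least_seq i q"] least_seq_notin_Qd[OF p \<open>p \<notin> Qd\<close>]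
    by (simp add: length_least_seq[OF q_V(1)] top_enat_def)
  then have "least_seq i q = replicate (Suc i) \<infinity>"
    using le least_seq_notin_Qd[OF p \<open>p \<notin> Qd\<close>] by simp
  then have "Ord q = \<infinity>"
    using last_least_seq[OF q_V(1)] by (simp del: replicate_Suc)
  then show False using Ord_in_Qd q_V(2) by simp
qed

lemma below_det_succ_subset:
  assumes q: "q \<in> Vd i"
  shows "below (Suc i) (det_succ i q) \<subseteq> det_succ i ` below i q"
proof
  fix x
  assume "x \<in> below (Suc i) (det_succ i q)"
  then have x: "x \<in> Vd (Suc i)" and less: "least_seq (Suc i) x < least_seq (Suc i) (det_succ i q)"
    by (simp_all add: below_def)
  have "x \<in> V (Suc i)" using x by (simp add: Vd_iff)
  then obtain p where p: "p \<in> V i" "(p, w i, x) \<in> trans A"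
    and p_seq: "least_seq (Suc i) x = least_seq i p @ [Ord x]"
    by (rule least_seq_Suc)
  have q_V: "q \<in> V i" "q \<in> Qd" using q by (simp_all add: Vd_iff)
  have "least_seq i p @ [Ord x] < least_seq i q @ [Ord (det_succ i q)]"
    using less p_seq least_seq_Suc_le[OF q_V(1) det_succ_trans[OF q_V(2)]] by simp
  then have le: "least_seq i p \<le> least_seq i q"
    using length_least_seq p(1) q_V(1) by (auto simp: snoc_less_snoc_iff)
  have p_Qd: "p \<in> Qd"
    using p(1) q le by (rule Qd_if_least_seq_le)
  have "p \<noteq> q"
    using less p(2) det_succ_unique[OF q_V(2)] by auto
  then have "least_seq i p \<noteq> least_seq i q"
    using least_seq_inj[of p i q] p(1) p_Qd q by (auto simp: Vd_iff)
  then have "p \<in> below i q"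
    using order.not_eq_order_implies_strict[OF _ le] p(1) p_Qd by (simp add: below_def Vd_iff)
  moreover have "det_succ i p = x"
    using det_succ_unique[OF p_Qd p(2)] by simp
  ultimately show "x \<in> det_succ i ` below i q" by blast
qed

lemma below_trans: "p \<in> below i q \<Longrightarrow> below i p \<subseteq> below i q"
  unfolding below_def by (auto elim: order.strict_trans)

lemma card_below_det_succ_le:
  assumes "q \<in> Vd i"
  shows "card (below (Suc i) (det_succ i q)) \<le> card (det_succ i ` below i q)"
  by (rule card_mono[OF finite_imageI[OF finite_below] below_det_succ_subset[OF assms]])

lemma Ind_det_succ_le:
  assumes "q \<in> Vd i"
  shows "Ind (Suc i) (det_succ i q) \<le> Ind i q"
proof -
  have "card (below (Suc i) (det_succ i q)) \<le> card (det_succ i ` below i q)"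
    using assms by (rule card_below_det_succ_le)
  also have "\<dots> \<le> card (below i q)"
    by (rule card_image_le[OF finite_below])
  finally show ?thesis using assms det_succ_Vd by (simp add: Ind_eq_card_below)
qed

lemma inj_on_det_succ_below:
  assumes "q \<in> Vd i" "Ind (Suc i) (det_succ i q) = Ind i q"
  shows "inj_on (det_succ i) (below i q)"
proof -
  have "card (below (Suc i) (det_succ i q)) \<le> card (det_succ i ` below i q)"
    using assms(1) by (rule card_below_det_succ_le)
  moreover have "card (det_succ i ` below i q) \<le> card (below i q)"
    by (rule card_image_le[OF finite_below])
  moreover have "card (below (Suc i) (det_succ i q)) = card (below i q)"
    using assms det_succ_Vd by (simp add: Ind_eq_card_below)
  ultimately have "card (det_succ i ` below i q) = card (below i q)"
    by linarith
  then show ?thesis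
    using inj_on_iff_eq_card[OF finite_below] by blast
qed

lemma det_succ_below_subset:
  assumes q: "q \<in> Vd i" "Ind (Suc i) (det_succ i q) = Ind i q" and p: "p \<in> below i q"
  shows "det_succ i ` below i p \<subseteq> below (Suc i) (det_succ i p)"
proof
  fix y
  assume "y \<in> det_succ i ` below i p"
  then obtain u where u: "u \<in> below i p" "y = det_succ i u" by blast
  have p_Vd: "p \<in> Vd i" and u_Vd: "u \<in> Vd i" and up: "least_seq i u < least_seq i p"
    using p u(1) by (simp_all add: below_def)
  have inj: "inj_on (det_succ i) (below i q)"
    using q by (rule inj_on_det_succ_below)
  have u_below: "u \<in> below i q" using below_trans[OF p] u(1) by blast
  have succ_Vd: "det_succ i u \<in> Vd (Suc i)" "det_succ i p \<in> Vd (Suc i)"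
    using det_succ_Vd p_Vd u_Vd by blast+
  have "det_succ i u \<noteq> det_succ i p"
  proof
    assume "det_succ i u = det_succ i p"
    with inj have "u = p" using u_below p by (rule inj_onD)
    then show False using up by (simp only: order.irrefl)
  qed
  then have "least_seq (Suc i) (det_succ i u) \<noteq> least_seq (Suc i) (det_succ i p)"
    using least_seq_inj succ_Vd by blast
  moreover have "\<not> least_seq (Suc i) (det_succ i p) < least_seq (Suc i) (det_succ i u)"
  proof
    assume "least_seq (Suc i) (det_succ i p) < least_seq (Suc i) (det_succ i u)"
    then have "det_succ i p \<in> below (Suc i) (det_succ i u)"
      using succ_Vd by (simp add: below_def)
    with below_det_succ_subset[OF u_Vd] have "det_succ i p \<in> det_succ i ` below i u"
      by (rule subsetD)
    then obtain p' where p': "det_succ i p = det_succ i p'" "p' \<in> below i u"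
      by (rule imageE)
    have "p' \<in> below i q" using below_trans[OF u_below] p'(2) by blast
    with inj p'(1)[symmetric] have "p' = p" using p by (rule inj_onD)
    then have "least_seq i p < least_seq i u" using p'(2) by (simp add: below_def)
    then show False using up by (rule order.asym)
  qed
  ultimately have "least_seq (Suc i) (det_succ i u) < least_seq (Suc i) (det_succ i p)"
    by (simp add: neq_iff)
  then show "y \<in> below (Suc i) (det_succ i p)"
    using u(2) succ_Vd by (simp add: below_def)
qed

lemma Ind_le_Ind_det_succ:
  assumes q: "q \<in> Vd i" "Ind (Suc i) (det_succ i q) = Ind i q" and p: "p \<in> below i q"
  shows "Ind i p \<le> Ind (Suc i) (det_succ i p)"
proof -
  have "inj_on (det_succ i) (below i p)"
    using inj_on_det_succ_below[OF q] below_trans[OF p] by (rule inj_on_subset)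
  then have "card (below i p) = card (det_succ i ` below i p)"
    by (simp add: card_image)
  also have "\<dots> \<le> card (below (Suc i) (det_succ i p))"
    by (rule card_mono[OF finite_below det_succ_below_subset[OF q p]])
  finally show ?thesis
    using p det_succ_Vd by (simp add: below_def Ind_eq_card_below)
qed

lemma trans_det_succ_iff: "p \<in> Vd i \<Longrightarrow> (p, w i, q) \<in> trans A \<longleftrightarrow> q = det_succ i p"
  using det_succ_trans det_succ_unique by (auto simp: Vd_iff)

lemma Dec_iff: "v \<in> Dec i \<longleftrightarrow> v \<in> Vd i \<and> Ind (Suc i) (det_succ i v) < Ind i v"
  unfolding dec_set_def by (auto simp: trans_det_succ_iff det_succ_Vd)

lemma Acc_iff: "u \<in> Acc i \<longleftrightarrow> u \<in> Vd i \<and> (u, w i, det_succ i u) \<in> acc A"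
  unfolding acc_set_def by (auto simp: trans_det_succ_iff det_succ_Vd)

lemma Ind_less_Dec_if_stable:
  assumes q: "q \<in> Vd i" "Ind (Suc i) (det_succ i q) = Ind i q" and v: "v \<in> Dec i"
  shows "Ind i q < Ind i v"
proof -
  have v_Vd: "v \<in> Vd i" and dec: "Ind (Suc i) (det_succ i v) < Ind i v"
    using v by (simp_all add: Dec_iff)
  have "Ind i v \<noteq> Ind i q"
    using Ind_inj[OF v_Vd q(1)] dec q(2) by auto
  moreover have "\<not> Ind i v < Ind i q"
  proof
    assume "Ind i v < Ind i q"
    then have "v \<in> below i q"
      using Ind_less_iff[OF v_Vd q(1)] v_Vd by (simp add: below_def)
    with q have "Ind i v \<le> Ind (Suc i) (det_succ i v)"
      by (rule Ind_le_Ind_det_succ)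
    then show False using dec by simp
  qed
  ultimately show ?thesis by simp
qed

text \<open>
  The four cases in the definition of color collapse into one minimum: indices are at most
  card Qd, so the fallback colour 2 * card Qd + 1 never undercuts another candidate.
\<close>

definition color_candidates :: "nat \<Rightarrow> nat set" where
  "color_candidates i = insert (2 * card Qd + 1)
     ((\<lambda>u. 2 * Ind i u) ` Acc i \<union> (\<lambda>v. 2 * Ind i v - 1) ` Dec i)"

lemma finite_Acc: "finite (Acc i)" and finite_Dec: "finite (Dec i)"
  using finite_Vd by (auto simp: Acc_iff Dec_iff intro: finite_subset)

lemma color_eq_Min: "col i = Min (color_candidates i)"
proof -
  let ?F = "(\<lambda>u. 2 * Ind i u) ` Acc i" and ?D = "(\<lambda>v. 2 * Ind i v - 1) ` Dec i"
  let ?c = "2 * card Qd + 1"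
  have finite: "finite (?F \<union> ?D)"
    using finite_Acc finite_Dec by simp
  have bounded: "x \<le> ?c" if "x \<in> ?F \<union> ?D" for x
    using that Ind_le_card_Qd by (fastforce simp: Acc_iff Dec_iff)
  have Min_insert_c: "Min (insert ?c S) = Min S" if "S \<noteq> {}" "S \<subseteq> ?F \<union> ?D" for S
  proof -
    have "finite S" using that(2) finite by (rule finite_subset)
    then have "Min S \<le> ?c" using that bounded Min_in by blast
    then show ?thesis using \<open>finite S\<close> that(1) by (simp add: min_absorb2)
  qed
  have mono: "mono (\<lambda>n::nat. 2 * n)" "mono (\<lambda>n::nat. 2 * n - 1)"
    by (auto simp: mono_def)
  have F: "Min ?F = 2 * Min (Ind i ` Acc i)" if "Acc i \<noteq> {}"
    using mono_Min_commute[OF mono(1)] that finite_Acc by (simp add: image_image)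
  have D: "Min ?D = 2 * Min (Ind i ` Dec i) - 1" if "Dec i \<noteq> {}"
    using mono_Min_commute[OF mono(2)] that finite_Dec by (simp add: image_image)
  consider "Acc i = {}" "Dec i = {}" | "Acc i \<noteq> {}" "Dec i = {}"
    | "Acc i = {}" "Dec i \<noteq> {}" | "Acc i \<noteq> {}" "Dec i \<noteq> {}"
    by blast
  then show ?thesis
  proof cases
    case 4
    then have "Min (?F \<union> ?D) = min (Min ?F) (Min ?D)"
      using finite_Acc finite_Dec by (simp add: Min_Un)
    then show ?thesis
      using 4 Min_insert_c[of "?F \<union> ?D"] F D by (simp add: color_def color_candidates_def)
  qed (use Min_insert_c F D in \<open>simp_all add: color_def color_candidates_def\<close>)
qed

lemma color_le_candidate: "c \<in> color_candidates i \<Longrightarrow> col i \<le> c"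
  unfolding color_eq_Min color_candidates_def using finite_Acc finite_Dec by simp

lemma color_in_candidates: "col i \<in> color_candidates i"
  unfolding color_eq_Min color_candidates_def using finite_Acc finite_Dec by (intro Min_in) auto

lemma color_le_card: "col i \<le> 2 * card Qd + 1"
  by (rule color_le_candidate) (simp add: color_candidates_def)

lemma color_le_Acc: "u \<in> Acc i \<Longrightarrow> col i \<le> 2 * Ind i u"
  by (rule color_le_candidate) (simp add: color_candidates_def)

lemma color_less_Dec:
  assumes "v \<in> Dec i"
  shows "col i < 2 * Ind i v"
proof -
  have "col i \<le> 2 * Ind i v - 1"
    using assms by (intro color_le_candidate) (simp add: color_candidates_def)
  then show ?thesis using Ind_pos[of i v] by linarith
qed

lemma color_cases:
  obtains "col i = 2 * card Qd + 1"
    | u where "u \<in> Acc i" "col i = 2 * Ind i u"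
    | v where "v \<in> Dec i" "col i = 2 * Ind i v - 1"
  using color_in_candidates[of i] unfolding color_candidates_def by blast

lemma even_color_Acc:
  assumes "even (col i)"
  obtains u where "u \<in> Acc i" "col i = 2 * Ind i u"
proof (cases rule: color_cases[of i])
  case (3 v)
  then have "col i = 2 * (Ind i v - 1) + 1" using Ind_pos[of i v] by simp
  with assms show ?thesis by simp
qed (use assms that in simp_all)

lemma odd_color_ge:
  assumes "odd (col i)" "k \<le> card Qd" "\<And>v. v \<in> Dec i \<Longrightarrow> k < Ind i v"
  shows "2 * k + 1 \<le> col i"
proof (cases rule: color_cases[of i])
  case (3 v)
  then show ?thesis using assms(3)[of v] by simp
qed (use assms in simp_all)

lemma run_V: "is_run A w r \<Longrightarrow> r i \<in> V i"
  by (induction i) (auto simp: is_run_def)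

lemma dag_has_accepting_run_iff: "dag_has_accepting_run A w \<longleftrightarrow> (\<exists>r. accepting_run A w r)"
  unfolding dag_has_accepting_run_def accepting_run_def using run_V by (auto simp: is_run_def)

lemma language_iff: "w \<in> language A \<longleftrightarrow> (\<exists>r. accepting_run A w r)"
  using word by (simp add: language_def)

lemma run_det_succ:
  assumes "is_run A w r" "r i \<in> Qd"
  shows "r i \<in> Vd i" "r (Suc i) = det_succ i (r i)"
  using assms run_V det_succ_unique by (auto simp: Vd_iff is_run_def)

lemma accepting_run_eventually_Qd:
  assumes "accepting_run A w r"
  obtains M where "\<And>i. i \<ge> M \<Longrightarrow> r i \<in> Qd"
proof -
  obtain M where "(r M, w M, r (Suc M)) \<in> acc A"
    using assms by (auto simp: accepting_run_def elim: INFM_E)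
  then have "r M \<in> Qd" by (simp add: acc_in_Qd)
  have "r i \<in> Qd" if "i \<ge> M" for i
    using that
  proof (induction i rule: dec_induct)
    case (step n)
    then show ?case using assms Qd_closed by (auto simp: accepting_run_def is_run_def)
  qed (fact \<open>r M \<in> Qd\<close>)
  then show ?thesis by (rule that)
qed

primrec det_extension :: "(nat \<Rightarrow> 'q) \<Rightarrow> nat \<Rightarrow> nat \<Rightarrow> 'q" where
  "det_extension r M 0 = r 0"
| "det_extension r M (Suc i) = (if i < M then r (Suc i) else det_succ i (det_extension r M i))"

lemma det_extension_prefix: "i \<le> M \<Longrightarrow> det_extension r M i = r i"
  by (induction i) auto

lemma Vd_obtain_run:
  assumes "u \<in> Vd M"
  obtains r where "is_run A w r" "r M = u" "\<And>i. i \<ge> M \<Longrightarrow> r i \<in> Qd"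
proof -
  obtain r0 where r0: "run_prefix A w M r0" "r0 M = u"
    using assms V_imp_run_prefix by (auto simp: Vd_iff)
  let ?r = "det_extension r0 M"
  have Qd: "?r i \<in> Qd" if "i \<ge> M" for i
    using that
  proof (induction i rule: dec_induct)
    case base
    then show ?case using assms r0(2) det_extension_prefix by (simp add: Vd_iff)
  next
    case (step n)
    then show ?case using det_succ_Qd by simp
  qed
  have "(?r i, w i, ?r (Suc i)) \<in> trans A" for i
  proof (cases "i < M")
    case True
    then show ?thesis using r0(1) det_extension_prefix by (simp add: run_prefix_def)
  next
    case False
    then show ?thesis using Qd det_succ_trans by simp
  qed
  moreover have "?r 0 = init A" using r0(1) by (simp add: run_prefix_def)
  ultimately have "is_run A w ?r" by (simp add: is_run_def)
  then show ?thesis using that Qd r0(2) det_extension_prefix by simp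
qed

subsection \<open>The colour summary\<close>

abbreviation color_sum where "color_sum \<equiv> color_summary A Qd w Ord"

lemma INFM_color_summary: "\<exists>\<^sub>\<infinity>i. col i = color_sum"
  unfolding color_summary_def
  by (rule INFM_eq_Least_INFM[where c = "2 * card Qd + 1"]) (use color_le_card in \<open>auto simp: INFM_nat_le\<close>)

lemma run_Ind_eventually_constant:
  assumes run: "is_run A w r" and Qd: "\<And>i. i \<ge> M \<Longrightarrow> r i \<in> Qd"
  shows "\<exists>N k. N \<ge> M \<and> (\<forall>i\<ge>N. Ind i (r i) = k)"
  using eventually_const_if_nonincreasing[of M "\<lambda>i. Ind i (r i)"] run_det_succ[OF run Qd]
    Ind_det_succ_le by metis

lemma INFM_color_le_on_accepting_run:
  assumes acc_run: "accepting_run A w r"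
    and N: "\<And>i. i \<ge> N \<Longrightarrow> r i \<in> Qd \<and> Ind i (r i) = k"
  shows "\<exists>\<^sub>\<infinity>i. col i \<le> 2 * k"
proof -
  have run: "is_run A w r" using acc_run by (simp add: accepting_run_def)
  have "\<exists>\<^sub>\<infinity>i. (r i, w i, r (Suc i)) \<in> acc A \<and> N \<le> i"
    using acc_run MOST_ge_nat by (auto simp: accepting_run_def intro: INFM_conjI)
  then show ?thesis
  proof (rule INFM_mono)
    fix i
    assume i: "(r i, w i, r (Suc i)) \<in> acc A \<and> N \<le> i"
    then have "r i \<in> Qd" using N by simp
    then have "r i \<in> Acc i"
      using run_det_succ[OF run] i by (simp add: Acc_iff)
    then show "col i \<le> 2 * k" using color_le_Acc N i by fastforce
  qed
qed

lemma even_color_summary_if_accepting: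
  assumes acc_run: "accepting_run A w r"
  shows "even color_sum"
proof -
  have run: "is_run A w r" using acc_run by (simp add: accepting_run_def)
  obtain M where M: "\<And>i. i \<ge> M \<Longrightarrow> r i \<in> Qd"
    using acc_run by (rule accepting_run_eventually_Qd) blast
  note det = run_det_succ[OF run M]
  obtain N k where N: "N \<ge> M" "\<And>i. i \<ge> N \<Longrightarrow> Ind i (r i) = k"
    using run_Ind_eventually_constant[OF run M] by blast
  have Dec_above: "k < Ind i v" if "i \<ge> N" "v \<in> Dec i" for i v
  proof -
    have "Ind (Suc i) (det_succ i (r i)) = Ind i (r i)"
      using N(2)[of i] N(2)[of "Suc i"] det(2)[of i] N(1) that(1) by simp
    with det(1) have "Ind i (r i) < Ind i v"
      using that(2) by (rule Ind_less_Dec_if_stable) (use N that(1) in simp)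
    then show ?thesis using N that(1) by simp
  qed
  have "\<exists>\<^sub>\<infinity>i. col i \<le> 2 * k"
    using acc_run by (rule INFM_color_le_on_accepting_run[where N = N]) (use M N in simp)
  then have "color_sum \<le> 2 * k"
    unfolding color_summary_def by (rule Least_INFM_le)
  obtain i where i: "i \<ge> N" "col i = color_sum"
    using INFM_color_summary by (auto simp: INFM_nat_le)
  have "k \<le> card Qd"
    using Ind_le_card_Qd[OF det(1)] N by (metis order_refl)
  show "even color_sum"
  proof (rule ccontr)
    assume "odd color_sum"
    then have "2 * k + 1 \<le> col i"
      using odd_color_ge[OF _ \<open>k \<le> card Qd\<close> Dec_above[OF i(1)]] i(2) by simp
    then show False using i(2) \<open>color_sum \<le> 2 * k\<close> by simp
  qed
qed

lemma Ind_constant_on_run: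
  assumes run: "is_run A w r" and Qd: "\<And>i. i \<ge> M \<Longrightarrow> r i \<in> Qd"
    and col: "\<And>i. i \<ge> M \<Longrightarrow> 2 * Ind M (r M) \<le> col i" and "i \<ge> M"
  shows "Ind i (r i) = Ind M (r M)"
  using \<open>i \<ge> M\<close>
proof (induction i rule: dec_induct)
  case (step n)
  note det = run_det_succ[OF run Qd[OF step.hyps(1)]]
  have "\<not> Ind (Suc n) (r (Suc n)) < Ind n (r n)"
  proof
    assume "Ind (Suc n) (r (Suc n)) < Ind n (r n)"
    then have "r n \<in> Dec n" using det by (simp add: Dec_iff)
    then have "col n < 2 * Ind M (r M)" using color_less_Dec step.IH by fastforce
    then show False using col step.hyps(1) by (simp add: not_less[symmetric])
  qed
  then show ?case using Ind_det_succ_le[OF det(1)] det(2) step.IH by simp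
qed simp

lemma INFM_acc_if_Ind_constant:
  assumes run: "is_run A w r" and Qd: "\<And>i. i \<ge> M \<Longrightarrow> r i \<in> Qd"
    and Ind_r: "\<And>i. i \<ge> M \<Longrightarrow> Ind i (r i) = k" and "\<exists>\<^sub>\<infinity>i. col i = 2 * k"
  shows "\<exists>\<^sub>\<infinity>i. (r i, w i, r (Suc i)) \<in> acc A"
proof -
  have "\<exists>\<^sub>\<infinity>i. col i = 2 * k \<and> M \<le> i"
    using assms(4) MOST_ge_nat by (rule INFM_conjI)
  then show ?thesis
  proof (rule INFM_mono)
    fix i
    assume i: "col i = 2 * k \<and> M \<le> i"
    then have "even (col i)" by simp
    then obtain u where u: "u \<in> Acc i" "col i = 2 * Ind i u"
      by (rule even_color_Acc)
    note det = run_det_succ[OF run Qd[of i]]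
    have "u \<in> Vd i" using u(1) by (simp add: Acc_iff)
    moreover have "r i \<in> Vd i" using det i by simp
    moreover have "Ind i u = Ind i (r i)" using u(2) i Ind_r[of i] by simp
    ultimately have "u = r i" by (rule Ind_inj)
    then show "(r i, w i, r (Suc i)) \<in> acc A" using u(1) det i by (simp add: Acc_iff)
  qed
qed

lemma accepting_run_if_even_color_summary:
  assumes "even color_sum"
  obtains r where "accepting_run A w r"
proof -
  obtain k where k: "color_sum = 2 * k" using assms by blast
  have "\<not> (\<exists>\<^sub>\<infinity>i. col i < 2 * k)"
  proof
    assume "\<exists>\<^sub>\<infinity>i. col i < 2 * k"
    then have "color_sum < 2 * k"
      unfolding color_summary_def by (rule Least_INFM_less)
    then show False using k by simp
  qed
  then obtain N where N: "\<And>i. i \<ge> N \<Longrightarrow> 2 * k \<le> col i"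
    by (auto simp: MOST_nat_le not_less)
  obtain M where M: "M \<ge> N" "col M = 2 * k"
    using INFM_color_summary k by (auto simp: INFM_nat_le)
  have "even (col M)" using M(2) by simp
  then obtain u where u: "u \<in> Acc M" "col M = 2 * Ind M u"
    by (rule even_color_Acc)
  have "u \<in> Vd M" using u(1) by (simp add: Acc_iff)
  then obtain r where run: "is_run A w r" "r M = u" and Qd: "\<And>i. i \<ge> M \<Longrightarrow> r i \<in> Qd"
    by (rule Vd_obtain_run) blast
  have Ind_r: "Ind i (r i) = k" if "i \<ge> M" for i
    using Ind_constant_on_run[OF run(1) Qd _ that] N M run(2) u(2) by auto
  have "\<exists>\<^sub>\<infinity>i. col i = 2 * k"
    using INFM_color_summary k by simp
  with run(1) Qd Ind_r have "\<exists>\<^sub>\<infinity>i. (r i, w i, r (Suc i)) \<in> acc A"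
    by (rule INFM_acc_if_Ind_constant)
  then show ?thesis using run(1) that by (simp add: accepting_run_def)
qed

end

theorem theorem1:
  fixes A :: "('q, 'a) nba" and Qd :: "'q set" and Ord :: "'q \<Rightarrow> enat" and w :: "nat \<Rightarrow> 'a"
  assumes "is_ldba A Qd" and "is_ordering A Qd Ord" and "is_word A w"
  shows "(even (color_summary A Qd w Ord) \<longleftrightarrow> dag_has_accepting_run A w)
       \<and> (even (color_summary A Qd w Ord) \<longleftrightarrow> w \<in> language A)"
proof -
  interpret ldba_dag A Qd Ord w
    using assms by unfold_locales
  have "even (color_summary A Qd w Ord) \<longleftrightarrow> (\<exists>r. accepting_run A w r)"
    using even_color_summary_if_accepting accepting_run_if_even_color_summary by blast
  then show ?thesis
    by (simp add: dag_has_accepting_run_iff language_iff)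
qed

end
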